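(* Let $\mathcal{S}\colon\mathbb{R}^{n\times d}\to\mathbb{R}^{n\times d}$ have $(p,\delta)$-structure. Then $\mathcal{S}$ is bijective and its inverse $\mathcal{D}:=\mathcal{S}^{-1}\colon\mathbb{R}^{n\times d}\to\mathbb{R}^{n\times d}$ has $(p',\delta^{p-1})$-structure, where $p'=p/(p-1)$.
   Context: For $q\in(1,\infty)$ and $\epsilon\ge0$ let $\varphi_{q,\epsilon}(t)=\int_0^t(\epsilon+s)^{q-2}s\,\mathrm ds$; for an N-function $\psi$ and $a\ge0$, the shifted function is $\psi_a(t)=\int_0^t\psi'(a+s)\frac{s}{a+s}\mathrm ds$. A map $\mathcal{T}\colon\mathbb{R}^{n\times d}\to\mathbb{R}^{n\times d}$ has $(q,\epsilon)$-structure if it is continuous, $\mathcal{T}(\mathbf0)=\mathbf0$, and there are constants $C_0,C_1>0$ with $(\mathcal{T}(\mathsf Q)-\mathcal{T}(\mathsf P)):(\mathsf Q-\mathsf P)\ge C_0(\varphi_{q,\epsilon})_{|\mathsf Q|}(|\mathsf Q-\mathsf P|)$ and $|\mathcal{T}(\mathsf Q)-\mathcal{T}(\mathsf P)|\le C_1(\varphi_{q,\epsilon})'_{|\mathsf Q|}(|\mathsf Q-\mathsf P|)$ for all $\mathsf P,\mathsf Q\in\mathbb{R}^{n\times d}$ with $\mathsf Q\ne\mathbf0$. Here $p\in(1,\infty)$, $\delta\ge0$. *)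

theory Defs
  imports "HOL-Analysis.Analysis"
begin

definition phi_deriv :: "real \<Rightarrow> real \<Rightarrow> real \<Rightarrow> real" where
  "phi_deriv q eps s = (eps + s) powr (q - 2) * s"

definition phi :: "real \<Rightarrow> real \<Rightarrow> real \<Rightarrow> real" where
  "phi q eps t = integral {0..t} (phi_deriv q eps)"

definition shifted_deriv :: "(real \<Rightarrow> real) \<Rightarrow> real \<Rightarrow> real \<Rightarrow> real" where
  "shifted_deriv dpsi a t = dpsi (a + t) * t / (a + t)"

definition shifted :: "(real \<Rightarrow> real) \<Rightarrow> real \<Rightarrow> real \<Rightarrow> real" where
  "shifted dpsi a t = integral {0..t} (shifted_deriv dpsi a)"

text \<open>(q,eps)-structure of a map on n x d real matrices (Frobenius norm / inner product).\<close>
definition has_structure ::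
  "real \<Rightarrow> real \<Rightarrow> (real^'d^'n \<Rightarrow> real^'d^'n) \<Rightarrow> bool" where
  "has_structure q eps T \<longleftrightarrow>
     continuous_on UNIV T \<and> T 0 = 0 \<and>
     (\<exists>C0>0. \<exists>C1>0. \<forall>P Q. Q \<noteq> 0 \<longrightarrow>
        (T Q - T P) \<bullet> (Q - P) \<ge> C0 * shifted (phi_deriv q eps) (norm Q) (norm (Q - P)) \<and>
        norm (T Q - T P) \<le> C1 * shifted_deriv (phi_deriv q eps) (norm Q) (norm (Q - P)))"

end

theory Submission
  imports Defs
begin

text \<open>
  For a > 0 the shifted N-function (\<phi>_{q,\<epsilon>})_a(t) is comparable to (\<epsilon> + a + t)^(q-2) t^2 and
  its derivative equals (\<epsilon> + a + t)^(q-2) t, so (q,\<epsilon>)-structure amounts to the explicit two-sided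
  bounds of \<open>structure_bounds\<close>. Their lower half makes S strictly monotone, hence injective, and
  coercive, hence proper; by invariance of domain the range of S is open and closed, so S is a
  homeomorphism. For the inverse put Q' = S Q, P' = S P and K = \<delta> + |Q| + |Q - P|. Then
  |Q'| ~ (\<delta> + 2|Q|)^(p-2) |Q| and |Q' - P'| ~ K^(p-2) |Q - P|, whence \<delta>^(p-1) + |Q'| + |Q' - P'| ~ K^(p-1).
  As (p - 1)(p' - 2) = 2 - p, raising this to the power p' - 2 turns the bounds for S into those
  with exponent p' and shift \<delta>^(p-1) for the inverse.
\<close>

lemma powr_mult_bounds:
  fixes m M x e r :: real
  assumes "0 < m" "0 < x" "m * x \<le> e" "e \<le> M * x"
  shows "min (m powr r) (M powr r) * x powr r \<le> e powr r"
    and "e powr r \<le> max (m powr r) (M powr r) * x powr r"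
proof -
  define l where "l = e / x"
  have l: "m \<le> l" "l \<le> M"
    using assms by (auto simp: l_def field_simps)
  then have "0 < l"
    using assms by linarith
  have e: "e powr r = l powr r * x powr r"
    using \<open>0 < l\<close> assms by (simp add: l_def powr_mult[symmetric])
  have "min (m powr r) (M powr r) \<le> l powr r \<and> l powr r \<le> max (m powr r) (M powr r)"
  proof (cases "r \<ge> 0")
    case True
    then have "m powr r \<le> l powr r" "l powr r \<le> M powr r"
      using l assms by (auto intro!: powr_mono2)
    then show ?thesis by linarith
  next
    case False
    then have "l powr r \<le> m powr r" "M powr r \<le> l powr r"
      using l assms \<open>0 < l\<close> by (auto intro!: powr_mono2')
    then show ?thesis by linarith
  qed
  then show "min (m powr r) (M powr r) * x powr r \<le> e powr r"
    and "e powr r \<le> max (m powr r) (M powr r) * x powr r"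
    using e by (auto intro: mult_right_mono)
qed

lemma powr_shift_mult_mono:
  fixes k s t q :: real
  assumes "0 < k" "1 < q" "0 \<le> s" "s \<le> t"
  shows "(k + s) powr (q - 2) * s \<le> (k + t) powr (q - 2) * t"
proof -
  have split: "(k + u) powr (q - 2) * u = (k + u) powr (q - 1) * (u / (k + u))" if "0 \<le> u" for u
    using that assms powr_add[of "k + u" "q - 2" 1] by (simp add: field_simps)
  have "(k + s) powr (q - 1) \<le> (k + t) powr (q - 1)"
    using assms by (intro powr_mono2) auto
  moreover have "s / (k + s) \<le> t / (k + t)"
    using assms by (simp add: field_simps mult_right_mono)
  ultimately have "(k + s) powr (q - 1) * (s / (k + s)) \<le> (k + t) powr (q - 1) * (t / (k + t))"
    using assms by (intro mult_mono) auto
  with assms show ?thesis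
    by (simp add: split)
qed

lemma integral_powr_shift_mult_le:
  fixes k t q :: real
  assumes "0 < k" "1 < q" "0 \<le> t"
  shows "integral {0..t} (\<lambda>s. (k + s) powr (q - 2) * s) \<le> (k + t) powr (q - 2) * t\<^sup>2"
proof -
  have "integral {0..t} (\<lambda>s. (k + s) powr (q - 2) * s) \<le> integral {0..t} (\<lambda>s. (k + t) powr (q - 2) * t)"
    using assms powr_shift_mult_mono[of k q]
    by (intro integral_le integrable_continuous_interval continuous_intros) auto
  then show ?thesis
    using assms by (simp add: power2_eq_square algebra_simps)
qed

lemma integral_powr_shift_mult_ge:
  fixes k t q :: real
  assumes "0 < k" "1 < q" "0 \<le> t"
  shows "min 1 ((1/2) powr (q - 2)) / 4 * (k + t) powr (q - 2) * t\<^sup>2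
           \<le> integral {0..t} (\<lambda>s. (k + s) powr (q - 2) * s)"
proof -
  let ?g = "\<lambda>s. (k + s) powr (q - 2) * s"
  have cont: "continuous_on {a..b} ?g" if "0 \<le> a" for a b
    using assms that by (intro continuous_intros) auto
  have "min 1 ((1/2) powr (q - 2)) * (k + t) powr (q - 2) \<le> (k + t/2) powr (q - 2)"
    using powr_mult_bounds(1)[of "1/2" "k + t" "k + t/2" 1 "q - 2"] assms by (simp add: min.commute)
  from mult_right_mono[OF this, of "t\<^sup>2 / 4"]
  have "min 1 ((1/2) powr (q - 2)) / 4 * (k + t) powr (q - 2) * t\<^sup>2 \<le> ?g (t/2) * (t/2)"
    by (simp add: power2_eq_square field_simps)
  also have "\<dots> = integral {t/2..t} (\<lambda>s. ?g (t/2))"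
    using assms by simp
  also have "\<dots> \<le> integral {t/2..t} ?g"
    using assms powr_shift_mult_mono[of k q "t/2"]
    by (intro integral_le integrable_continuous_interval cont) auto
  also have "\<dots> \<le> integral {0..t} ?g"
    using assms by (intro integral_subset_le integrable_continuous_interval cont) auto
  finally show ?thesis .
qed

definition structure_bounds :: "real \<Rightarrow> real \<Rightarrow> ('a::real_inner \<Rightarrow> 'a) \<Rightarrow> bool" where
  "structure_bounds q \<epsilon> T \<longleftrightarrow> (\<exists>c>0. \<exists>C>0. \<forall>P Q. Q \<noteq> 0 \<longrightarrow>
     c * (\<epsilon> + norm Q + norm (Q - P)) powr (q - 2) * (norm (Q - P))\<^sup>2 \<le> (T Q - T P) \<bullet> (Q - P) \<and>
     norm (T Q - T P) \<le> C * (\<epsilon> + norm Q + norm (Q - P)) powr (q - 2) * norm (Q - P))"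

lemma shifted_deriv_phi_deriv:
  "0 < a + t \<Longrightarrow> shifted_deriv (phi_deriv q \<epsilon>) a t = (\<epsilon> + a + t) powr (q - 2) * t"
  unfolding shifted_deriv_def phi_deriv_def by (simp add: add.assoc)

lemma shifted_phi_deriv:
  "0 < a \<Longrightarrow> shifted (phi_deriv q \<epsilon>) a t = integral {0..t} (\<lambda>s. (\<epsilon> + a + s) powr (q - 2) * s)"
  unfolding shifted_def by (rule integral_cong) (simp add: shifted_deriv_phi_deriv)

lemma shifted_phi_deriv_bounds:
  fixes q \<epsilon> a t :: real
  assumes "1 < q" "0 \<le> \<epsilon>" "0 < a" "0 \<le> t"
  shows "min 1 ((1/2) powr (q - 2)) / 4 * (\<epsilon> + a + t) powr (q - 2) * t\<^sup>2 \<le> shifted (phi_deriv q \<epsilon>) a t"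
    and "shifted (phi_deriv q \<epsilon>) a t \<le> (\<epsilon> + a + t) powr (q - 2) * t\<^sup>2"
  using assms integral_powr_shift_mult_ge[of "\<epsilon> + a" q t] integral_powr_shift_mult_le[of "\<epsilon> + a" q t]
  by (simp_all add: shifted_phi_deriv)

lemma has_structure_imp_structure_bounds:
  fixes T :: "real^'d^'n \<Rightarrow> real^'d^'n"
  assumes "1 < q" "0 \<le> \<epsilon>" "has_structure q \<epsilon> T"
  shows "structure_bounds q \<epsilon> T"
proof -
  define \<kappa> where "\<kappa> = min 1 ((1/2) powr (q - 2)) / 4"
  obtain C0 C1 where "0 < C0" "0 < C1" and H: "\<And>P Q. Q \<noteq> 0 \<Longrightarrow>
      C0 * shifted (phi_deriv q \<epsilon>) (norm Q) (norm (Q - P)) \<le> (T Q - T P) \<bullet> (Q - P) \<and>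
      norm (T Q - T P) \<le> C1 * shifted_deriv (phi_deriv q \<epsilon>) (norm Q) (norm (Q - P))"
    using assms(3) unfolding has_structure_def by blast
  have "C0 * \<kappa> * (\<epsilon> + norm Q + norm (Q - P)) powr (q - 2) * (norm (Q - P))\<^sup>2 \<le> (T Q - T P) \<bullet> (Q - P) \<and>
      norm (T Q - T P) \<le> C1 * (\<epsilon> + norm Q + norm (Q - P)) powr (q - 2) * norm (Q - P)"
    if "Q \<noteq> 0" for P Q
  proof -
    have "C0 * (\<kappa> * (\<epsilon> + norm Q + norm (Q - P)) powr (q - 2) * (norm (Q - P))\<^sup>2)
        \<le> C0 * shifted (phi_deriv q \<epsilon>) (norm Q) (norm (Q - P))"
      using shifted_phi_deriv_bounds(1)[OF assms(1,2), of "norm Q" "norm (Q - P)"] that \<open>0 < C0\<close>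
      by (intro mult_left_mono) (auto simp: \<kappa>_def)
    then show ?thesis
      using H[OF that, of P] that by (simp add: shifted_deriv_phi_deriv add_pos_nonneg mult.assoc)
  qed
  moreover have "0 < C0 * \<kappa>"
    using \<open>0 < C0\<close> by (simp add: \<kappa>_def)
  ultimately show ?thesis
    unfolding structure_bounds_def using \<open>0 < C1\<close> by blast
qed

lemma structure_bounds_imp_has_structure:
  fixes T :: "real^'d^'n \<Rightarrow> real^'d^'n"
  assumes "1 < q" "0 \<le> \<epsilon>" "continuous_on UNIV T" "T 0 = 0" "structure_bounds q \<epsilon> T"
  shows "has_structure q \<epsilon> T"
proof -
  obtain c C where "0 < c" "0 < C" and H: "\<And>P Q. Q \<noteq> 0 \<Longrightarrow>
      c * (\<epsilon> + norm Q + norm (Q - P)) powr (q - 2) * (norm (Q - P))\<^sup>2 \<le> (T Q - T P) \<bullet> (Q - P) \<and>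
      norm (T Q - T P) \<le> C * (\<epsilon> + norm Q + norm (Q - P)) powr (q - 2) * norm (Q - P)"
    using assms(5) unfolding structure_bounds_def by blast
  have "c * shifted (phi_deriv q \<epsilon>) (norm Q) (norm (Q - P)) \<le> (T Q - T P) \<bullet> (Q - P) \<and>
      norm (T Q - T P) \<le> C * shifted_deriv (phi_deriv q \<epsilon>) (norm Q) (norm (Q - P))"
    if "Q \<noteq> 0" for P Q
  proof -
    have "c * shifted (phi_deriv q \<epsilon>) (norm Q) (norm (Q - P))
        \<le> c * ((\<epsilon> + norm Q + norm (Q - P)) powr (q - 2) * (norm (Q - P))\<^sup>2)"
      using shifted_phi_deriv_bounds(2)[OF assms(1,2), of "norm Q" "norm (Q - P)"] that \<open>0 < c\<close>
      by (intro mult_left_mono) auto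
    then show ?thesis
      using H[OF that, of P] that by (simp add: shifted_deriv_phi_deriv add_pos_nonneg mult.assoc)
  qed
  with assms(3,4) \<open>0 < c\<close> \<open>0 < C\<close> show ?thesis
    unfolding has_structure_def by blast
qed

lemma structure_boundsE:
  fixes T :: "'a::real_inner \<Rightarrow> 'a"
  assumes "structure_bounds q \<epsilon> T"
  obtains c C where "0 < c" "0 < C"
    and "\<And>P Q. Q \<noteq> 0 \<Longrightarrow>
      c * (\<epsilon> + norm Q + norm (Q - P)) powr (q - 2) * (norm (Q - P))\<^sup>2 \<le> (T Q - T P) \<bullet> (Q - P)"
    and "\<And>P Q. Q \<noteq> 0 \<Longrightarrow>
      c * (\<epsilon> + norm Q + norm (Q - P)) powr (q - 2) * norm (Q - P) \<le> norm (T Q - T P)"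
    and "\<And>P Q. Q \<noteq> 0 \<Longrightarrow>
      norm (T Q - T P) \<le> C * (\<epsilon> + norm Q + norm (Q - P)) powr (q - 2) * norm (Q - P)"
proof -
  obtain c C where "0 < c" "0 < C" and H: "\<And>P Q. Q \<noteq> 0 \<Longrightarrow>
      c * (\<epsilon> + norm Q + norm (Q - P)) powr (q - 2) * (norm (Q - P))\<^sup>2 \<le> (T Q - T P) \<bullet> (Q - P) \<and>
      norm (T Q - T P) \<le> C * (\<epsilon> + norm Q + norm (Q - P)) powr (q - 2) * norm (Q - P)"
    using assms unfolding structure_bounds_def by blast
  have "c * (\<epsilon> + norm Q + norm (Q - P)) powr (q - 2) * norm (Q - P) \<le> norm (T Q - T P)"
    if "Q \<noteq> 0" for P Q
  proof (cases "P = Q")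
    case False
    have "c * (\<epsilon> + norm Q + norm (Q - P)) powr (q - 2) * norm (Q - P) * norm (Q - P)
        \<le> norm (T Q - T P) * norm (Q - P)"
      using H[OF that, of P] norm_cauchy_schwarz[of "T Q - T P" "Q - P"]
      by (simp add: power2_eq_square mult.assoc)
    with False show ?thesis
      by simp
  qed simp
  with H that \<open>0 < c\<close> \<open>0 < C\<close> show ?thesis
    by blast
qed

lemma structure_bounds_imp_inj:
  fixes T :: "'a::real_inner \<Rightarrow> 'a"
  assumes "structure_bounds q \<epsilon> T" "0 \<le> \<epsilon>"
  shows "inj T"
proof -
  obtain c where "0 < c" and lower: "\<And>P Q. Q \<noteq> 0 \<Longrightarrow>
      c * (\<epsilon> + norm Q + norm (Q - P)) powr (q - 2) * norm (Q - P) \<le> norm (T Q - T P)"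
    using structure_boundsE[OF assms(1)] by metis
  have "P = Q" if "T P = T Q" "Q \<noteq> 0" for P Q
  proof (rule ccontr)
    assume "P \<noteq> Q"
    have "0 < \<epsilon> + norm Q + norm (Q - P)"
      using \<open>0 \<le> \<epsilon>\<close> that(2) by (simp add: add_pos_nonneg add_nonneg_pos)
    then have "0 < c * (\<epsilon> + norm Q + norm (Q - P)) powr (q - 2) * norm (Q - P)"
      using \<open>0 < c\<close> \<open>P \<noteq> Q\<close> by simp
    also have "\<dots> \<le> norm (T Q - T P)"
      using lower[OF that(2)] .
    finally show False
      using that(1) by simp
  qed
  then show ?thesis
    by (metis injI)
qed

lemma structure_bounds_coercive:
  fixes T :: "'a::real_inner \<Rightarrow> 'a"
  assumes "structure_bounds q \<epsilon> T" "T 0 = 0" "1 < q" "0 \<le> \<epsilon>"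
  shows "filterlim T at_infinity at_infinity"
proof -
  obtain c where "0 < c" and lower: "\<And>P Q. Q \<noteq> 0 \<Longrightarrow>
      c * (\<epsilon> + norm Q + norm (Q - P)) powr (q - 2) * norm (Q - P) \<le> norm (T Q - T P)"
    using structure_boundsE[OF assms(1)] by metis
  define m where "m = min 1 (3 powr (q - 2))"
  have "0 < c * m"
    using \<open>0 < c\<close> by (simp add: m_def)
  have "c * m * norm Q powr (q - 1) \<le> norm (T Q)" if "max \<epsilon> 1 \<le> norm Q" for Q
  proof -
    have "0 < norm Q"
      using that by linarith
    have "m * norm Q powr (q - 2) \<le> (\<epsilon> + 2 * norm Q) powr (q - 2)"
      using powr_mult_bounds(1)[of 1 "norm Q" "\<epsilon> + 2 * norm Q" 3 "q - 2"] that assms(4) \<open>0 < norm Q\<close>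
      by (simp add: m_def)
    then have "c * m * norm Q powr (q - 1) \<le> c * (\<epsilon> + 2 * norm Q) powr (q - 2) * norm Q"
      using \<open>0 < c\<close> \<open>0 < norm Q\<close> powr_add[of "norm Q" "q - 2" 1]
      by (simp add: mult_left_mono mult_right_mono mult.assoc)
    also have "\<dots> \<le> norm (T Q)"
      using lower[of Q 0] \<open>0 < norm Q\<close> assms(2) by (simp add: add.commute)
    finally show ?thesis .
  qed
  then have "eventually (\<lambda>Q. c * m * norm Q powr (q - 1) \<le> norm (T Q)) at_infinity"
    unfolding eventually_at_infinity by blast
  moreover have "filterlim (\<lambda>Q. c * m * norm Q powr (q - 1)) at_top at_infinity"
    using \<open>0 < c * m\<close> assms(3)
    by (intro filterlim_tendsto_pos_mult_at_top[OF tendsto_const]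
        filterlim_compose[OF real_powr_at_top filterlim_norm_at_top]) auto
  ultimately show ?thesis
    unfolding filterlim_at_infinity_conv_norm_at_top by (rule filterlim_at_top_mono[rotated])
qed

lemma surj_if_continuous_inj_coercive:
  fixes f :: "'a::euclidean_space \<Rightarrow> 'a"
  assumes "continuous_on UNIV f" "inj f" "filterlim f at_infinity at_infinity"
  shows "surj f"
proof -
  have "compact (f -` K)" if K: "compact K" for K
  proof -
    obtain B where B: "\<And>y. y \<in> K \<Longrightarrow> norm y \<le> B"
      using compact_imp_bounded[OF K] by (auto simp: bounded_iff)
    have "eventually (\<lambda>x. B + 1 \<le> norm (f x)) at_infinity"
      using filterlim_at_infinity_imp_norm_at_top[OF assms(3)] by (simp add: filterlim_at_top)
    then obtain R where R: "\<And>x. R \<le> norm x \<Longrightarrow> B + 1 \<le> norm (f x)"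
      unfolding eventually_at_infinity by blast
    have "f -` K \<subseteq> cball 0 R"
    proof
      fix x
      assume "x \<in> f -` K"
      then have "\<not> B + 1 \<le> norm (f x)"
        using B by force
      then show "x \<in> cball 0 R"
        using R[of x] by (cases "R \<le> norm x") auto
    qed
    then show ?thesis
      using closed_vimage[OF compact_imp_closed[OF K] assms(1)]
      by (simp add: compact_eq_bounded_closed bounded_subset[OF bounded_cball])
  qed
  then have "proper_map euclidean euclidean f"
    using assms(1)
    by (intro compact_imp_proper_map) (auto simp: k_space_euclideanreal Hausdorff_imp_kc_space vimage_def)
  then have "closed (range f)"
    by (metis closed_closedin closed_map_def closedin_topspace proper_imp_closed_map topspace_euclidean)
  moreover have "open (range f)"
    using invariance_of_domain[OF assms(1) open_UNIV] assms(2) by simp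
  ultimately show ?thesis
    using clopen[of "range f"] by auto
qed

lemma dual_scale_upper:
  fixes p \<delta> C a t a' t' :: real
  assumes "1 < p" "0 \<le> \<delta>" "0 < a" "0 \<le> t" "0 \<le> C"
    and "a' \<le> C * (\<delta> + 2 * a) powr (p - 2) * a"
    and "t' \<le> C * (\<delta> + a + t) powr (p - 2) * t"
  shows "\<delta> powr (p - 1) + a' + t' \<le> (1 + 2 powr (p - 1) * C + C) * (\<delta> + a + t) powr (p - 1)"
proof -
  define K where "K = \<delta> + a + t"
  have "0 < K"
    using assms by (simp add: K_def)
  have "\<delta> powr (p - 1) \<le> K powr (p - 1)"
    using assms by (intro powr_mono2) (auto simp: K_def)
  moreover have "(\<delta> + 2 * a) powr (p - 2) * a \<le> 2 powr (p - 1) * K powr (p - 1)"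
  proof -
    have "(\<delta> + 2 * a) powr (p - 2) * a \<le> (\<delta> + 2 * a) powr (p - 2) * (\<delta> + 2 * a)"
      using assms by (intro mult_left_mono) auto
    also have "\<dots> = (\<delta> + 2 * a) powr (p - 1)"
      using assms powr_add[of "\<delta> + 2 * a" "p - 2" 1] by simp
    also have "\<dots> \<le> (2 * K) powr (p - 1)"
      using assms by (intro powr_mono2) (auto simp: K_def)
    also have "\<dots> = 2 powr (p - 1) * K powr (p - 1)"
      using \<open>0 < K\<close> by (simp add: powr_mult)
    finally show ?thesis .
  qed
  from mult_left_mono[OF this assms(5)]
  have "a' \<le> 2 powr (p - 1) * C * K powr (p - 1)"
    using assms(6) by (simp add: mult.assoc mult.left_commute)
  moreover have "K powr (p - 2) * t \<le> K powr (p - 1)"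
    using assms powr_add[of K "p - 2" 1] \<open>0 < K\<close> by (simp add: K_def mult_left_mono)
  from mult_left_mono[OF this assms(5)]
  have "t' \<le> C * K powr (p - 1)"
    using assms(7) by (simp add: K_def mult.assoc)
  ultimately show ?thesis
    unfolding K_def[symmetric] by (simp add: distrib_right)
qed

lemma powr_mult_lower_if_dominant:
  fixes p \<delta> a t :: real
  assumes "0 \<le> \<delta>" "0 < a" "0 \<le> t" "\<delta> + a + t \<le> 3 * a"
  shows "min ((1/3) powr (p - 2)) (2 powr (p - 2)) / 3 * (\<delta> + a + t) powr (p - 1)
           \<le> (\<delta> + 2 * a) powr (p - 2) * a"
proof -
  define K where "K = \<delta> + a + t"
  have "0 < K"
    using assms by (simp add: K_def)
  have "min ((1/3) powr (p - 2)) (2 powr (p - 2)) * K powr (p - 2) \<le> (\<delta> + 2 * a) powr (p - 2)"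
    using powr_mult_bounds(1)[of "1/3" K "\<delta> + 2 * a" 2 "p - 2"] assms \<open>0 < K\<close>
    by (simp add: K_def)
  then have "min ((1/3) powr (p - 2)) (2 powr (p - 2)) * K powr (p - 2) * (K / 3)
      \<le> (\<delta> + 2 * a) powr (p - 2) * a"
    using assms \<open>0 < K\<close> by (intro mult_mono) (auto simp: K_def)
  then show ?thesis
    using \<open>0 < K\<close> powr_add[of K "p - 2" 1] by (simp add: K_def)
qed

lemma dual_scale_lower:
  fixes p \<delta> c a t a' t' :: real
  assumes "1 < p" "0 \<le> \<delta>" "0 < a" "0 \<le> t" "0 < c"
    and "c * (\<delta> + 2 * a) powr (p - 2) * a \<le> a'"
    and "c * (\<delta> + a + t) powr (p - 2) * t \<le> t'"
  shows "min ((1/3) powr (p - 1)) (c / 3 * min 1 (min ((1/3) powr (p - 2)) (2 powr (p - 2))))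
           * (\<delta> + a + t) powr (p - 1) \<le> \<delta> powr (p - 1) + a' + t'"
proof -
  define K where "K = \<delta> + a + t"
  define \<mu> where "\<mu> = min ((1/3) powr (p - 2)) (2 powr (p - 2))"
  define m where "m = min ((1/3) powr (p - 1)) (c / 3 * min 1 \<mu>)"
  have "0 < K"
    using assms by (simp add: K_def)
  have "c / 3 * min 1 \<mu> \<le> c / 3 * \<mu>" "c / 3 * min 1 \<mu> \<le> c / 3"
    using assms(5) by (simp_all add: mult_left_le)
  then have m: "m \<le> (1/3) powr (p - 1)" "m \<le> c * \<mu> / 3" "m \<le> c / 3"
    by (simp_all add: m_def min.coboundedI2)
  have "0 \<le> a'" "0 \<le> t'"
    using assms by (smt (verit) mult_nonneg_nonneg powr_ge_zero)+
  consider "K \<le> 3 * \<delta>" | "K \<le> 3 * a" | "K \<le> 3 * t"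
    unfolding K_def by linarith
  then have "m * K powr (p - 1) \<le> \<delta> powr (p - 1) \<or> m * K powr (p - 1) \<le> a' \<or> m * K powr (p - 1) \<le> t'"
  proof cases
    case 1
    have "m * K powr (p - 1) \<le> (1/3) powr (p - 1) * K powr (p - 1)"
      using m by (intro mult_right_mono) auto
    also have "\<dots> = (K / 3) powr (p - 1)"
      using \<open>0 < K\<close> powr_mult[of "1/3" K "p - 1"] by simp
    also have "\<dots> \<le> \<delta> powr (p - 1)"
      using 1 assms \<open>0 < K\<close> by (intro powr_mono2) auto
    finally show ?thesis by blast
  next
    case 2
    have "m * K powr (p - 1) \<le> c * \<mu> / 3 * K powr (p - 1)"
      using m(2) by (intro mult_right_mono) auto
    also have "\<dots> = c * (\<mu> / 3 * K powr (p - 1))"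
      by simp
    also have "\<dots> \<le> c * ((\<delta> + 2 * a) powr (p - 2) * a)"
      using powr_mult_lower_if_dominant[of \<delta> a t p] 2 assms
      by (intro mult_left_mono) (auto simp: K_def \<mu>_def)
    finally show ?thesis
      using assms(6) by (simp add: mult.assoc)
  next
    case 3
    have "m * K powr (p - 1) \<le> c * (K powr (p - 2) * (K / 3))"
      using m \<open>0 < K\<close> powr_add[of K "p - 2" 1] by (simp add: mult_right_mono)
    also have "\<dots> \<le> c * (K powr (p - 2) * t)"
      using 3 assms by (intro mult_left_mono) auto
    finally show ?thesis
      using assms(7) unfolding K_def by (simp add: mult.assoc)
  qed
  then show ?thesis
    using \<open>0 \<le> a'\<close> \<open>0 \<le> t'\<close> powr_ge_zero[of \<delta> "p - 1"] unfolding K_def m_def \<mu>_def by linarith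
qed

lemma dual_power_bounds:
  fixes p m M c C K E t t' X :: real
  defines "r \<equiv> p / (p - 1) - 2"
  assumes "1 < p" "0 < m" "0 < c" "0 < C" "0 < K" "0 \<le> t"
    and E: "m * K powr (p - 1) \<le> E" "E \<le> M * K powr (p - 1)"
    and t': "c * K powr (p - 2) * t \<le> t'" "t' \<le> C * K powr (p - 2) * t"
    and X: "c * K powr (p - 2) * t\<^sup>2 \<le> X"
  shows "c / (max (m powr r) (M powr r) * C\<^sup>2) * E powr r * t'\<^sup>2 \<le> X"
    and "t \<le> 1 / (min (m powr r) (M powr r) * c) * E powr r * t'"
proof -
  define lo where "lo = min (m powr r) (M powr r)"
  define hi where "hi = max (m powr r) (M powr r)"
  have "0 < K powr (p - 1)"
    using \<open>0 < K\<close> by simp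
  moreover have "m * K powr (p - 1) \<le> M * K powr (p - 1)"
    using E by linarith
  ultimately have "0 < M"
    using \<open>0 < m\<close> by simp
  then have "0 < lo" "0 < hi"
    using \<open>0 < m\<close> by (simp_all add: lo_def hi_def less_max_iff_disj)
  have "(p - 1) * r = 2 - p"
    using assms by (simp add: r_def field_simps)
  from powr_mult_bounds[OF \<open>0 < m\<close> \<open>0 < K powr (p - 1)\<close> E, of r]
  have Er: "lo * K powr (2 - p) \<le> E powr r" "E powr r \<le> hi * K powr (2 - p)"
    using \<open>0 < K\<close> by (simp_all add: lo_def hi_def powr_powr \<open>(p - 1) * r = 2 - p\<close>)
  have cancel: "K powr (2 - p) * K powr (p - 2) = 1"
    using \<open>0 < K\<close> by (simp add: powr_add[symmetric])
  have "0 \<le> c * K powr (p - 2) * t"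
    using assms by simp
  with t'(1) have "0 \<le> t'"
    by linarith
  have "E powr r * t'\<^sup>2 \<le> hi * K powr (2 - p) * (C * K powr (p - 2) * t)\<^sup>2"
    using Er \<open>0 \<le> t'\<close> t'(2) \<open>0 < hi\<close> by (intro mult_mono power_mono) auto
  also have "\<dots> = hi * C\<^sup>2 * (K powr (p - 2) * t\<^sup>2) * (K powr (2 - p) * K powr (p - 2))"
    by (simp add: power2_eq_square algebra_simps)
  also have "\<dots> = hi * C\<^sup>2 / c * (c * K powr (p - 2) * t\<^sup>2)"
    unfolding cancel using assms by simp
  also have "\<dots> \<le> hi * C\<^sup>2 / c * X"
    using X \<open>0 < hi\<close> assms by (intro mult_left_mono) auto
  finally show "c / (max (m powr r) (M powr r) * C\<^sup>2) * E powr r * t'\<^sup>2 \<le> X"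
    using \<open>0 < hi\<close> \<open>0 < c\<close> \<open>0 < C\<close> unfolding hi_def[symmetric] by (simp add: field_simps)
  have "lo * c * t = lo * c * t * (K powr (2 - p) * K powr (p - 2))"
    by (simp add: cancel)
  also have "\<dots> = (lo * K powr (2 - p)) * (c * K powr (p - 2) * t)"
    by (simp add: algebra_simps)
  also have "\<dots> \<le> E powr r * t'"
    using Er(1) t'(1) \<open>0 \<le> c * K powr (p - 2) * t\<close> by (intro mult_mono) auto
  finally show "t \<le> 1 / (min (m powr r) (M powr r) * c) * E powr r * t'"
    using \<open>0 < lo\<close> \<open>0 < c\<close> unfolding lo_def[symmetric] by (simp add: field_simps)
qed

lemma dual_structure_estimates:
  fixes p \<delta> c C :: real
  assumes "1 < p" "0 \<le> \<delta>" "0 < c" "0 < C"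
  shows "\<exists>c'>0. \<exists>C'>0. \<forall>a t a' t' X. 0 < a \<longrightarrow> 0 \<le> t \<longrightarrow>
    c * (\<delta> + 2 * a) powr (p - 2) * a \<le> a' \<longrightarrow> a' \<le> C * (\<delta> + 2 * a) powr (p - 2) * a \<longrightarrow>
    c * (\<delta> + a + t) powr (p - 2) * t \<le> t' \<longrightarrow> t' \<le> C * (\<delta> + a + t) powr (p - 2) * t \<longrightarrow>
    c * (\<delta> + a + t) powr (p - 2) * t\<^sup>2 \<le> X \<longrightarrow>
    c' * (\<delta> powr (p - 1) + a' + t') powr (p / (p - 1) - 2) * t'\<^sup>2 \<le> X \<and>
    t \<le> C' * (\<delta> powr (p - 1) + a' + t') powr (p / (p - 1) - 2) * t'"
proof -
  define m where "m = min ((1/3) powr (p - 1)) (c / 3 * min 1 (min ((1/3) powr (p - 2)) (2 powr (p - 2))))"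
  define M where "M = 1 + 2 powr (p - 1) * C + C"
  define r where "r = p / (p - 1) - 2"
  have "0 < m" "0 < M"
    using assms by (simp_all add: m_def M_def add_pos_nonneg)
  then have "0 < c / (max (m powr r) (M powr r) * C\<^sup>2)" "0 < 1 / (min (m powr r) (M powr r) * c)"
    using assms by (simp_all add: less_max_iff_disj)
  moreover have "c / (max (m powr r) (M powr r) * C\<^sup>2) * (\<delta> powr (p - 1) + a' + t') powr r * t'\<^sup>2 \<le> X \<and>
      t \<le> 1 / (min (m powr r) (M powr r) * c) * (\<delta> powr (p - 1) + a' + t') powr r * t'"
    if "0 < a" "0 \<le> t"
      and a': "c * (\<delta> + 2 * a) powr (p - 2) * a \<le> a'" "a' \<le> C * (\<delta> + 2 * a) powr (p - 2) * a"
      and t': "c * (\<delta> + a + t) powr (p - 2) * t \<le> t'" "t' \<le> C * (\<delta> + a + t) powr (p - 2) * t"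
      and X: "c * (\<delta> + a + t) powr (p - 2) * t\<^sup>2 \<le> X"
    for a t a' t' X
  proof -
    have "m * (\<delta> + a + t) powr (p - 1) \<le> \<delta> powr (p - 1) + a' + t'"
      using dual_scale_lower[OF assms(1,2) that(1,2) assms(3) a'(1) t'(1)] by (simp add: m_def)
    moreover have "\<delta> powr (p - 1) + a' + t' \<le> M * (\<delta> + a + t) powr (p - 1)"
      using dual_scale_upper[OF assms(1,2) that(1,2) _ a'(2) t'(2)] assms(4) by (simp add: M_def)
    moreover have "0 < \<delta> + a + t"
      using assms that by simp
    ultimately show ?thesis
      using dual_power_bounds[OF assms(1) \<open>0 < m\<close> assms(3,4) _ that(2) _ _ t' X] unfolding r_def by simp
  qed
  ultimately show ?thesis
    unfolding r_def by blast
qed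

lemma structure_bounds_inverse:
  fixes S D :: "'a::real_inner \<Rightarrow> 'a"
  assumes "1 < p" "0 \<le> \<delta>" "structure_bounds p \<delta> S" "S 0 = 0"
    and SD: "\<And>y. S (D y) = y"
  shows "structure_bounds (p / (p - 1)) (\<delta> powr (p - 1)) D"
proof -
  obtain c C where "0 < c" "0 < C"
    and X: "\<And>P Q. Q \<noteq> 0 \<Longrightarrow>
      c * (\<delta> + norm Q + norm (Q - P)) powr (p - 2) * (norm (Q - P))\<^sup>2 \<le> (S Q - S P) \<bullet> (Q - P)"
    and lower: "\<And>P Q. Q \<noteq> 0 \<Longrightarrow>
      c * (\<delta> + norm Q + norm (Q - P)) powr (p - 2) * norm (Q - P) \<le> norm (S Q - S P)"
    and upper: "\<And>P Q. Q \<noteq> 0 \<Longrightarrow>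
      norm (S Q - S P) \<le> C * (\<delta> + norm Q + norm (Q - P)) powr (p - 2) * norm (Q - P)"
    using structure_boundsE[OF assms(3)] by blast
  obtain c' C' where "0 < c'" "0 < C'" and estimates: "\<forall>a t a' t' X. 0 < a \<longrightarrow> 0 \<le> t \<longrightarrow>
    c * (\<delta> + 2 * a) powr (p - 2) * a \<le> a' \<longrightarrow> a' \<le> C * (\<delta> + 2 * a) powr (p - 2) * a \<longrightarrow>
    c * (\<delta> + a + t) powr (p - 2) * t \<le> t' \<longrightarrow> t' \<le> C * (\<delta> + a + t) powr (p - 2) * t \<longrightarrow>
    c * (\<delta> + a + t) powr (p - 2) * t\<^sup>2 \<le> X \<longrightarrow>
    c' * (\<delta> powr (p - 1) + a' + t') powr (p / (p - 1) - 2) * t'\<^sup>2 \<le> X \<and>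
    t \<le> C' * (\<delta> powr (p - 1) + a' + t') powr (p / (p - 1) - 2) * t'"
    using dual_structure_estimates[OF assms(1,2) \<open>0 < c\<close> \<open>0 < C\<close>] by blast
  have "c' * (\<delta> powr (p - 1) + norm Q' + norm (Q' - P')) powr (p / (p - 1) - 2) * (norm (Q' - P'))\<^sup>2
          \<le> (D Q' - D P') \<bullet> (Q' - P') \<and>
        norm (D Q' - D P') \<le> C' * (\<delta> powr (p - 1) + norm Q' + norm (Q' - P')) powr (p / (p - 1) - 2) * norm (Q' - P')"
    if "Q' \<noteq> 0" for P' Q'
  proof -
    define Q P where "Q = D Q'" and "P = D P'"
    have "S Q = Q'"
      by (simp add: Q_def SD)
    then have "Q \<noteq> 0"
      using that assms(4) by auto
    have "c * (\<delta> + 2 * norm Q) powr (p - 2) * norm Q \<le> norm (S Q)"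
      "norm (S Q) \<le> C * (\<delta> + 2 * norm Q) powr (p - 2) * norm Q"
      using lower[OF \<open>Q \<noteq> 0\<close>, of 0] upper[OF \<open>Q \<noteq> 0\<close>, of 0] assms(4)
      by (simp_all add: add.assoc)
    from estimates[rule_format, OF _ norm_ge_zero this lower[OF \<open>Q \<noteq> 0\<close>, of P]
        upper[OF \<open>Q \<noteq> 0\<close>, of P] X[OF \<open>Q \<noteq> 0\<close>, of P]] \<open>Q \<noteq> 0\<close>
    have "c' * (\<delta> powr (p - 1) + norm (S Q) + norm (S Q - S P)) powr (p / (p - 1) - 2) * (norm (S Q - S P))\<^sup>2
          \<le> (S Q - S P) \<bullet> (Q - P) \<and>
        norm (Q - P) \<le> C' * (\<delta> powr (p - 1) + norm (S Q) + norm (S Q - S P)) powr (p / (p - 1) - 2) * norm (S Q - S P)"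
      by simp
    then show ?thesis
      unfolding Q_def P_def by (simp add: SD inner_commute)
  qed
  with \<open>0 < c'\<close> \<open>0 < C'\<close> show ?thesis
    unfolding structure_bounds_def by blast
qed

theorem lemma5p1:
  fixes S :: "real^'d^'n \<Rightarrow> real^'d^'n" and p \<delta> :: real
  assumes "1 < p" and "0 \<le> \<delta>" and "has_structure p \<delta> S"
  shows "bij S \<and> has_structure (p / (p - 1)) (\<delta> powr (p - 1)) (inv S)"
proof -
  have cont: "continuous_on UNIV S" and "S 0 = 0"
    using assms(3) unfolding has_structure_def by blast+
  have bounds: "structure_bounds p \<delta> S"
    using has_structure_imp_structure_bounds[OF assms] .
  have "inj S"
    using structure_bounds_imp_inj[OF bounds assms(2)] .
  moreover have "surj S"
    using surj_if_continuous_inj_coercive[OF cont \<open>inj S\<close>]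
      structure_bounds_coercive[OF bounds \<open>S 0 = 0\<close> assms(1,2)] .
  moreover have "continuous_on UNIV (inv S)"
    using continuous_on_inverse_open[OF open_UNIV cont, of "inv S"] \<open>inj S\<close> \<open>surj S\<close> by simp
  moreover have "inv S 0 = 0"
    using inv_f_f[OF \<open>inj S\<close>, of 0] \<open>S 0 = 0\<close> by simp
  moreover have "structure_bounds (p / (p - 1)) (\<delta> powr (p - 1)) (inv S)"
    using structure_bounds_inverse[OF assms(1,2) bounds \<open>S 0 = 0\<close>] surj_f_inv_f[OF \<open>surj S\<close>] by blast
  moreover have "1 < p / (p - 1)"
    using assms(1) by simp
  ultimately show ?thesis
    using structure_bounds_imp_has_structure[of "p / (p - 1)" "\<delta> powr (p - 1)" "inv S"]
    by (simp add: bij_def)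
qed

end
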